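(* Let $K\subset Y$ and $K_h\subset Y_h$ be non-empty, convex and closed sets, where $Y_h\subset Y$ is a finite-dimensional subspace (not necessarily $K_h\subset K$). Let $\overline{y}\in H_Y$, $\varrho>0$, let $y_\varrho\in K$ solve $\langle y_\varrho,y-y_\varrho\rangle_{H_Y}+\varrho\langle Dy_\varrho,y-y_\varrho\rangle_{Y^*,Y}\ge\langle\overline{y},y-y_\varrho\rangle_{H_Y}$ for all $y\in K$, and let $y_{\varrho h}\in K_h$ solve $\langle y_{\varrho h},y_h-y_{\varrho h}\rangle_{H_Y}+\varrho\langle Dy_{\varrho h},y_h-y_{\varrho h}\rangle_{Y^*,Y}\ge\langle\overline{y},y_h-y_{\varrho h}\rangle_{H_Y}$ for all $y_h\in K_h$. Assume $\varrho Dy_\varrho+y_\varrho-\overline{y}\in H_Y$. Then $$\|y_\varrho-y_{\varrho h}\|_{H_Y}^2+2\varrho\|y_\varrho-y_{\varrho h}\|_D^2\le 2\inf_{y_h\in K_h}\Big[3\|y_\varrho-y_h\|_{H_Y}^2+\varrho\|y_\varrho-y_h\|_D^2\Big]+4\|\varrho Dy_\varrho+y_\varrho-\overline{y}\|_{H_Y}^2.$$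
   Context: Abstract setting: Let $Y\subset H_Y\subset Y^*$ be a Gelfand triple of real Hilbert spaces, with duality pairing $\langle\cdot,\cdot\rangle_{Y^*,Y}$ extending the inner product of $H_Y$. Let $D:Y\to Y^*$ be bounded, linear, self-adjoint and elliptic, $\|y\|_D:=\langle Dy,y\rangle_{Y^*,Y}^{1/2}$ (an equivalent norm on $Y$). An element $g\in Y^*$ is said to belong to $H_Y$ if there is $w\in H_Y$ with $\langle g,v\rangle_{Y^*,Y}=\langle w,v\rangle_{H_Y}$ for all $v\in Y$, and then $\|g\|_{H_Y}:=\|w\|_{H_Y}$. *)

theory Defs
  imports "HOL-Analysis.Analysis"
begin

text \<open>Gelfand triple Y \<subseteq> H_Y \<subseteq> Y*: Y is a real Hilbert space (type 'y), H_Y is a real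
Hilbert space (type 'h), and the inclusion Y \<subseteq> H_Y is the continuous, injective
linear map \<iota> with dense range. Elements of Y* are bounded linear functionals on Y;
h \<in> H_Y is identified with the functional v \<mapsto> \<langle>h, \<iota> v\<rangle>_H, so the duality pairing
extends the H_Y inner product.\<close>

definition gelfand_embedding :: "('y::{real_inner,complete_space} \<Rightarrow> 'h::{real_inner,complete_space}) \<Rightarrow> bool" where
  "gelfand_embedding \<iota> \<longleftrightarrow> bounded_linear \<iota> \<and> inj \<iota> \<and> closure (range \<iota>) = UNIV"

text \<open>An operator D : Y \<rightarrow> Y*, represented by D y v = \<langle>D y, v\<rangle>_{Y*,Y}:
bounded, linear, self-adjoint and elliptic.\<close>

definition bdd_sa_elliptic_op :: "('y::real_normed_vector \<Rightarrow> 'y \<Rightarrow> real) \<Rightarrow> bool" where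
  "bdd_sa_elliptic_op D \<longleftrightarrow> bounded_bilinear D \<and> (\<forall>y v. D y v = D v y)
     \<and> (\<exists>\<alpha>>0. \<forall>y. D y y \<ge> \<alpha> * (norm y)\<^sup>2)"

definition normD :: "('y \<Rightarrow> 'y \<Rightarrow> real) \<Rightarrow> 'y \<Rightarrow> real" where
  "normD D y = sqrt (D y y)"

definition in_HY :: "('y \<Rightarrow> 'h::real_inner) \<Rightarrow> ('y \<Rightarrow> real) \<Rightarrow> bool" where
  "in_HY \<iota> g \<longleftrightarrow> (\<exists>w. \<forall>v. g v = inner w (\<iota> v))"

definition normHY :: "('y \<Rightarrow> 'h::real_inner) \<Rightarrow> ('y \<Rightarrow> real) \<Rightarrow> real" where
  "normHY \<iota> g = norm (THE w. \<forall>v. g v = inner w (\<iota> v))"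

end

theory Submission
  imports Defs
begin

text \<open>Write \<open>a(u,v) = \<langle>\<iota> u, \<iota> v\<rangle> + \<rho> D u v\<close>, \<open>e = y\<^sub>\<rho> - y\<^sub>\<rho>\<^sub>h\<close> and \<open>d = y\<^sub>\<rho> - y\<^sub>h\<close> for
  some \<open>y\<^sub>h \<in> K\<^sub>h\<close>. The regularity assumption says that the residual \<open>a(y\<^sub>\<rho>,\<cdot>) - \<langle>ybar,\<iota> \<cdot>\<rangle>\<close>
  is represented by some \<open>w \<in> H\<^sub>Y\<close>. Testing the discrete variational inequality with
  \<open>y\<^sub>h\<close> and subtracting the residual identity at \<open>y\<^sub>h - y\<^sub>\<rho>\<^sub>h = e - d\<close> gives
  \<open>a(e,e) \<le> a(e,d) + \<langle>w, \<iota>(e - d)\<rangle>\<close>; Cauchy-Schwarz and Young's inequality turn this into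
  the claimed bound for every \<open>y\<^sub>h\<close>, and one takes the infimum. Since \<open>K\<^sub>h \<subseteq> K\<close> is not
  assumed, the continuous variational inequality is never tested with discrete
  functions: the residual representation replaces it.\<close>

lemma gelfand_representer_unique:
  fixes \<iota> :: "'y::{real_inner,complete_space} \<Rightarrow> 'h::{real_inner,complete_space}"
  assumes "gelfand_embedding \<iota>" and "\<forall>v. g v = inner w (\<iota> v)"
  shows "(THE w. \<forall>v. g v = inner w (\<iota> v)) = w"
proof (rule the_equality)
  show "\<forall>v. g v = inner w (\<iota> v)" by fact
next
  fix w' assume w': "\<forall>v. g v = inner w' (\<iota> v)"
  have "range \<iota> \<subseteq> {x. inner (w' - w) x = 0}"
    using assms(2) w' by (auto simp: inner_diff_left)
  then have "closure (range \<iota>) \<subseteq> {x. inner (w' - w) x = 0}"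
    by (simp add: closure_minimal closed_hyperplane)
  with assms(1) have "inner (w' - w) (w' - w) = 0"
    unfolding gelfand_embedding_def by blast
  then show "w' = w" by simp
qed

lemma normHY_eq_norm_representer:
  fixes \<iota> :: "'y::{real_inner,complete_space} \<Rightarrow> 'h::{real_inner,complete_space}"
  assumes "gelfand_embedding \<iota>" and "\<forall>v. g v = inner w (\<iota> v)"
  shows "normHY \<iota> g = norm w"
  unfolding normHY_def using gelfand_representer_unique[OF assms] by simp

lemma bdd_sa_elliptic_op_nonneg:
  assumes "bdd_sa_elliptic_op D"
  shows "D y y \<ge> 0"
proof -
  from assms obtain \<alpha> where "\<alpha> > 0" "D y y \<ge> \<alpha> * (norm y)\<^sup>2"
    unfolding bdd_sa_elliptic_op_def by blast
  then show ?thesis by (smt (verit) mult_nonneg_nonneg zero_le_power2)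
qed

lemma normD_squared:
  assumes "bdd_sa_elliptic_op D"
  shows "(normD D y)\<^sup>2 = D y y"
  unfolding normD_def using bdd_sa_elliptic_op_nonneg[OF assms] by simp

lemma bdd_sa_elliptic_op_cross_le:
  assumes "bdd_sa_elliptic_op D"
  shows "2 * D u v \<le> D u u + D v v"
proof -
  have bil: "bounded_bilinear D" and sym: "D v u = D u v"
    using assms unfolding bdd_sa_elliptic_op_def by auto
  have "0 \<le> D (u - v) (u - v)" by (rule bdd_sa_elliptic_op_nonneg[OF assms])
  also have "\<dots> = D u u + D v v - 2 * D u v"
    by (simp add: bounded_bilinear.diff_left[OF bil] bounded_bilinear.diff_right[OF bil] sym)
  finally show ?thesis by simp
qed

lemma discrete_vi_error_le_residual:
  fixes \<iota> :: "'y::real_normed_vector \<Rightarrow> 'h::real_inner"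
  assumes "linear \<iota>" and "bounded_bilinear D"
    and vi: "inner (\<iota> u) (\<iota> (z - u)) + \<rho> * D u (z - u) \<ge> inner ybar (\<iota> (z - u))"
    and res: "\<rho> * D y (z - u) + inner (\<iota> y) (\<iota> (z - u)) - inner ybar (\<iota> (z - u))
      = inner w (\<iota> (z - u))"
  shows "(norm (\<iota> (y - u)))\<^sup>2 + \<rho> * D (y - u) (y - u)
    \<le> inner (\<iota> (y - u)) (\<iota> (y - z)) + \<rho> * D (y - u) (y - z) + inner w (\<iota> (z - u))"
proof -
  have \<iota>_diff: "\<iota> (a - b) = \<iota> a - \<iota> b" for a b
    using \<open>linear \<iota>\<close> by (rule linear_diff)
  note D_diff = bounded_bilinear.diff_left[OF assms(2)] bounded_bilinear.diff_right[OF assms(2)]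
  have "(norm (\<iota> (y - u)))\<^sup>2 + \<rho> * D (y - u) (y - u)
      = inner (\<iota> (y - u)) (\<iota> (y - z)) + \<rho> * D (y - u) (y - z)
        + (inner (\<iota> y) (\<iota> (z - u)) + \<rho> * D y (z - u))
        - (inner (\<iota> u) (\<iota> (z - u)) + \<rho> * D u (z - u))"
    by (simp add: power2_norm_eq_inner \<iota>_diff inner_diff_left inner_diff_right D_diff
        algebra_simps)
  also have "\<dots> \<le> inner (\<iota> (y - u)) (\<iota> (y - z)) + \<rho> * D (y - u) (y - z)
        + (inner (\<iota> y) (\<iota> (z - u)) + \<rho> * D y (z - u)) - inner ybar (\<iota> (z - u))"
    using vi by simp
  also have "\<dots> = inner (\<iota> (y - u)) (\<iota> (y - z)) + \<rho> * D (y - u) (y - z) + inner w (\<iota> (z - u))"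
    using res by simp
  finally show ?thesis .
qed

lemma quadratic_error_absorption:
  fixes E F W P Q R :: real
  assumes "E\<^sup>2 + P \<le> E * F + R + W * (E + F)" and "2 * R \<le> P + Q"
  shows "E\<^sup>2 + 2 * P \<le> 6 * F\<^sup>2 + 2 * Q + 4 * W\<^sup>2"
proof -
  have "0 \<le> (E - 2 * F)\<^sup>2" "0 \<le> (W - E)\<^sup>2" "0 \<le> (W - F)\<^sup>2" by simp_all
  then show ?thesis using assms by (simp add: power2_eq_square algebra_simps)
qed

lemma discrete_error_bound_at:
  fixes \<iota> :: "'y::real_normed_vector \<Rightarrow> 'h::real_inner"
  assumes "linear \<iota>" and D: "bdd_sa_elliptic_op D" and "\<rho> \<ge> 0"
    and vi: "inner (\<iota> u) (\<iota> (z - u)) + \<rho> * D u (z - u) \<ge> inner ybar (\<iota> (z - u))"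
    and res: "\<forall>v. \<rho> * D y v + inner (\<iota> y) (\<iota> v) - inner ybar (\<iota> v) = inner w (\<iota> v)"
  shows "(norm (\<iota> (y - u)))\<^sup>2 + 2 * \<rho> * (normD D (y - u))\<^sup>2
    \<le> 2 * (3 * (norm (\<iota> (y - z)))\<^sup>2 + \<rho> * (normD D (y - z))\<^sup>2) + 4 * (norm w)\<^sup>2"
proof -
  have bil: "bounded_bilinear D"
    using D unfolding bdd_sa_elliptic_op_def by blast
  let ?E = "norm (\<iota> (y - u))" and ?F = "norm (\<iota> (y - z))"
  have "\<iota> (z - u) = \<iota> (y - u) - \<iota> (y - z)"
    by (simp add: linear_diff[OF \<open>linear \<iota>\<close>, symmetric])
  then have "inner w (\<iota> (z - u)) \<le> norm w * norm (\<iota> (y - u) - \<iota> (y - z))"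
    using norm_cauchy_schwarz[of w] by simp
  also have "\<dots> \<le> norm w * (?E + ?F)"
    by (simp add: mult_left_mono norm_triangle_ineq4)
  finally have "?E\<^sup>2 + \<rho> * D (y - u) (y - u) \<le> ?E * ?F + \<rho> * D (y - u) (y - z) + norm w * (?E + ?F)"
    using discrete_vi_error_le_residual[OF \<open>linear \<iota>\<close> bil vi res[rule_format]]
      norm_cauchy_schwarz[of "\<iota> (y - u)" "\<iota> (y - z)"]
    by linarith
  moreover have "2 * (\<rho> * D (y - u) (y - z)) \<le> \<rho> * D (y - u) (y - u) + \<rho> * D (y - z) (y - z)"
    using mult_left_mono[OF bdd_sa_elliptic_op_cross_le[OF D, of "y - u" "y - z"] \<open>\<rho> \<ge> 0\<close>]
    by (simp add: algebra_simps)
  ultimately show ?thesis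
    using quadratic_error_absorption by (simp add: normD_squared[OF D] mult.assoc)
qed

theorem mainTheorem9:
  fixes \<iota> :: "'y::{real_inner,complete_space} \<Rightarrow> 'h::{real_inner,complete_space}"
    and D :: "'y \<Rightarrow> 'y \<Rightarrow> real"
    and K Kh Yh :: "'y set"
    and ybar :: 'h and \<rho> :: real and y\<rho> y\<rho>h :: 'y
  assumes gelfand: "gelfand_embedding \<iota>"
    and D: "bdd_sa_elliptic_op D"
    and Yh: "subspace Yh" "\<exists>B. finite B \<and> Yh = span B"
    and K: "K \<noteq> {}" "convex K" "closed K"
    and Kh: "Kh \<noteq> {}" "convex Kh" "closed Kh" "Kh \<subseteq> Yh"
    and rho: "\<rho> > 0"
    and y\<rho>: "y\<rho> \<in> K"
      "\<forall>y\<in>K. inner (\<iota> y\<rho>) (\<iota> (y - y\<rho>)) + \<rho> * D y\<rho> (y - y\<rho>) \<ge> inner ybar (\<iota> (y - y\<rho>))"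
    and y\<rho>h: "y\<rho>h \<in> Kh"
      "\<forall>yh\<in>Kh. inner (\<iota> y\<rho>h) (\<iota> (yh - y\<rho>h)) + \<rho> * D y\<rho>h (yh - y\<rho>h) \<ge> inner ybar (\<iota> (yh - y\<rho>h))"
    and reg: "in_HY \<iota> (\<lambda>v. \<rho> * D y\<rho> v + inner (\<iota> y\<rho>) (\<iota> v) - inner ybar (\<iota> v))"
  shows "(norm (\<iota> (y\<rho> - y\<rho>h)))\<^sup>2 + 2 * \<rho> * (normD D (y\<rho> - y\<rho>h))\<^sup>2
    \<le> 2 * (INF yh\<in>Kh. 3 * (norm (\<iota> (y\<rho> - yh)))\<^sup>2 + \<rho> * (normD D (y\<rho> - yh))\<^sup>2)
      + 4 * (normHY \<iota> (\<lambda>v. \<rho> * D y\<rho> v + inner (\<iota> y\<rho>) (\<iota> v) - inner ybar (\<iota> v)))\<^sup>2"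
proof -
  from reg obtain w
    where w: "\<forall>v. \<rho> * D y\<rho> v + inner (\<iota> y\<rho>) (\<iota> v) - inner ybar (\<iota> v) = inner w (\<iota> v)"
    unfolding in_HY_def by blast
  have "linear \<iota>"
    using gelfand unfolding gelfand_embedding_def by (simp add: bounded_linear.linear)
  let ?err = "(norm (\<iota> (y\<rho> - y\<rho>h)))\<^sup>2 + 2 * \<rho> * (normD D (y\<rho> - y\<rho>h))\<^sup>2"
  have "(?err - 4 * (norm w)\<^sup>2) / 2
      \<le> (INF yh\<in>Kh. 3 * (norm (\<iota> (y\<rho> - yh)))\<^sup>2 + \<rho> * (normD D (y\<rho> - yh))\<^sup>2)"
  proof (rule cINF_greatest[OF Kh(1)])
    fix yh assume "yh \<in> Kh"
    with discrete_error_bound_at[OF \<open>linear \<iota>\<close> D _ _ w] rho y\<rho>h(2)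
    show "(?err - 4 * (norm w)\<^sup>2) / 2 \<le> 3 * (norm (\<iota> (y\<rho> - yh)))\<^sup>2 + \<rho> * (normD D (y\<rho> - yh))\<^sup>2"
      by fastforce
  qed
  then show ?thesis
    using normHY_eq_norm_representer[OF gelfand w] by simp
qed

end
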